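(* Let $C$ and $C'$ be configurations on the same board of $l$ rows and $w$ columns containing $n$ tiles. If $C$ can be reconfigured into $C'$ by a sequence of steps each in direction south or east, then there exists a step sequence $S$ of length $O(n(l+w))$, using only south and east steps, such that applying $S$ to $C$ yields $C'$.
   Context: A board is a rectangular region of the square lattice, formally a partition $B=(O,W)$ of a rectangular set of grid points into open locations $O$ and blocked locations $W$. A tile is a labeled unit square centered on an open location. A configuration $C=(B,P)$ consists of a board $B$ and a set $P$ of tiles, no two at the same location and none at a blocked location. A step in direction $d\in\{N,E,S,W\}$ transforms a configuration as follows: consider translating every tile by one unit in direction $d$; every tile whose translation would land on a blocked location is temporarily added to the blocked set, and this is repeated until no remaining tile's translation lands on a blocked location; then all remaining tiles are translated by one unit in direction $d$. A step sequence is a sequence of directions, applied as successive steps. $C$ can be reconfigured into $C'$ if some step sequence applied to $C$ yields $C'$. *)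

theory Defs
  imports Main
begin

type_synonym loc = "int \<times> int"  (* (row, column); row grows southwards, column eastwards *)

datatype dir = DirN | DirE | DirS | DirW

fun delta :: "dir \<Rightarrow> loc" where
  "delta DirN = (-1, 0)"
| "delta DirS = (1, 0)"
| "delta DirE = (0, 1)"
| "delta DirW = (0, -1)"

definition shift :: "loc \<Rightarrow> dir \<Rightarrow> loc" where
  "shift p d = (fst p + fst (delta d), snd p + snd (delta d))"

definition unshift :: "loc \<Rightarrow> dir \<Rightarrow> loc" where
  "unshift p d = (fst p - fst (delta d), snd p - snd (delta d))"

definition rect :: "nat \<Rightarrow> nat \<Rightarrow> loc set" where
  "rect l w = {p. 0 \<le> fst p \<and> fst p < int l \<and> 0 \<le> snd p \<and> snd p < int w}"

text \<open>A board is given by its set Opn of open locations; every other grid point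
  (the blocked part of the rectangle, and everything outside it) is blocked.
  Tiles are a partial map P from locations to labels.
  stuck Opn P d p: the tile at p is (eventually) added to the blocked set in a step
  in direction d, i.e. the least fixpoint of the iterative blocking process.\<close>
inductive stuck :: "loc set \<Rightarrow> (loc \<Rightarrow> 'a option) \<Rightarrow> dir \<Rightarrow> loc \<Rightarrow> bool"
  for Opn P d where
  blocked: "P p \<noteq> None \<Longrightarrow> shift p d \<notin> Opn \<Longrightarrow> stuck Opn P d p"
| chain: "P p \<noteq> None \<Longrightarrow> stuck Opn P d (shift p d) \<Longrightarrow> stuck Opn P d p"

definition step :: "loc set \<Rightarrow> dir \<Rightarrow> (loc \<Rightarrow> 'a option) \<Rightarrow> (loc \<Rightarrow> 'a option)" where
  "step Opn d P = (\<lambda>q.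
     if P q \<noteq> None \<and> stuck Opn P d q then P q
     else if P (unshift q d) \<noteq> None \<and> \<not> stuck Opn P d (unshift q d) then P (unshift q d)
     else None)"

fun steps :: "loc set \<Rightarrow> dir list \<Rightarrow> (loc \<Rightarrow> 'a option) \<Rightarrow> (loc \<Rightarrow> 'a option)" where
  "steps Opn [] P = P"
| "steps Opn (d # ds) P = steps Opn ds (step Opn d P)"

end

theory Submission
  imports Defs
begin

text \<open>Let the potential of a configuration be the sum of the anti-diagonal indices
  (row + column) of its tiles. A south or east step moves the non-stuck tiles one
  anti-diagonal further and keeps the stuck ones, so it raises the potential by the number
  of tiles it moves. Deleting the steps that move no tile does not change the outcome, and
  each remaining step raises the potential by at least one. Since every tile lies on one of
  the anti-diagonals 0, ..., l + w, the potential ranges over an interval of length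
  n (l + w), which bounds the number of remaining steps.\<close>

lemma shift_unshift [simp]: "shift (unshift q d) d = q" "unshift (shift q d) d = q"
  by (cases q; simp add: shift_def unshift_def)+

definition moving :: "loc set \<Rightarrow> (loc \<Rightarrow> 'a option) \<Rightarrow> dir \<Rightarrow> loc set" where
  "moving Opn P d = {q \<in> dom P. \<not> stuck Opn P d q}"

definition potential :: "(loc \<Rightarrow> 'a option) \<Rightarrow> int" where
  "potential P = (\<Sum>q\<in>dom P. fst q + snd q)"

lemma dom_step:
  "dom (step Opn d P) = (dom P - moving Opn P d) \<union> (\<lambda>q. shift q d) ` moving Opn P d"
  unfolding step_def moving_def dom_def
  by (auto split: if_splits intro!: image_eqI[where x = "unshift _ d"])

text \<open>A tile moving onto a stuck tile would be stuck itself, by rule chain.\<close>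
lemma moving_image_disjoint:
  "(dom P - moving Opn P d) \<inter> (\<lambda>q. shift q d) ` moving Opn P d = {}"
  unfolding moving_def using stuck.chain[of P _ Opn d] by blast

lemma step_eq_self_if_nothing_moves:
  assumes "moving Opn P d = {}"
  shows "step Opn d P = P"
proof
  fix q
  have all_stuck: "P p \<noteq> None \<Longrightarrow> stuck Opn P d p" for p
    using assms unfolding moving_def by blast
  show "step Opn d P q = P q"
    unfolding step_def using all_stuck[of q] all_stuck[of "unshift q d"] by (cases "P q") auto
qed

lemma inj_on_shift: "inj_on (\<lambda>q. shift q d) A"
  by (metis inj_onI shift_unshift(2))

lemma finite_dom_step: "finite (dom P) \<Longrightarrow> finite (dom (step Opn d P))"
  by (simp add: dom_step moving_def)

lemma card_dom_step:
  assumes "finite (dom P)"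
  shows "card (dom (step Opn d P)) = card (dom P)"
proof -
  have fin: "finite (dom P - moving Opn P d)" "finite (moving Opn P d)"
    using assms by (auto simp: moving_def)
  have "card (dom (step Opn d P)) = card (dom P - moving Opn P d) + card (moving Opn P d)"
    unfolding dom_step
    by (simp add: card_Un_disjoint[OF fin(1) finite_imageI[OF fin(2)] moving_image_disjoint]
        card_image[OF inj_on_shift])
  also have "\<dots> = card (dom P)"
    using card_Diff_subset[OF fin(2)] card_mono[OF assms, of "moving Opn P d"]
    by (auto simp: moving_def)
  finally show ?thesis .
qed

lemma potential_step:
  assumes fin: "finite (dom P)" and d: "d \<in> {DirS, DirE}"
  shows "potential (step Opn d P) = potential P + int (card (moving Opn P d))"
proof -
  let ?f = "\<lambda>q::loc. fst q + snd q"
  let ?M = "moving Opn P d"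
  have fin': "finite (dom P - ?M)" "finite ?M" using fin by (auto simp: moving_def)
  have shift_diag: "?f (shift q d) = ?f q + 1" for q
    using d by (auto simp: shift_def)
  have "potential (step Opn d P) = sum ?f (dom P - ?M) + sum ?f ((\<lambda>q. shift q d) ` ?M)"
    unfolding potential_def dom_step
    by (rule sum.union_disjoint[OF fin'(1) finite_imageI[OF fin'(2)] moving_image_disjoint])
  also have "sum ?f ((\<lambda>q. shift q d) ` ?M) = (\<Sum>q\<in>?M. ?f q + 1)"
    unfolding sum.reindex[OF inj_on_shift] comp_def shift_diag ..
  also have "\<dots> = sum ?f ?M + int (card ?M)"
    by (simp add: sum.distrib)
  also have "sum ?f (dom P - ?M) + (sum ?f ?M + int (card ?M)) = potential P + int (card ?M)"
    using sum.subset_diff[of ?M "dom P" ?f] fin by (simp add: potential_def moving_def)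
  finally show ?thesis .
qed

lemma card_dom_steps: "finite (dom P) \<Longrightarrow> card (dom (steps Opn S P)) = card (dom P)"
  by (induction S arbitrary: P) (simp_all add: card_dom_step finite_dom_step)

lemma steps_shortcut:
  assumes "finite (dom P)" and "set S \<subseteq> {DirS, DirE}"
  shows "\<exists>S'. set S' \<subseteq> set S \<and> steps Opn S' P = steps Opn S P \<and>
           int (length S') \<le> potential (steps Opn S P) - potential P"
  using assms
proof (induction S arbitrary: P)
  case Nil
  show ?case by (intro exI[of _ "[]"]) simp
next
  case (Cons d S)
  let ?Q = "step Opn d P"
  have d: "d \<in> {DirS, DirE}" using Cons.prems(2) by simp
  obtain S' where S': "set S' \<subseteq> set S" "steps Opn S' ?Q = steps Opn S ?Q"
    "int (length S') \<le> potential (steps Opn S ?Q) - potential ?Q"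
    using Cons.IH[OF finite_dom_step[OF Cons.prems(1), of Opn d]] Cons.prems(2) by auto
  note pot = potential_step[OF Cons.prems(1) d, of Opn]
  show ?case
  proof (cases "moving Opn P d = {}")
    case True
    then show ?thesis
      using S' step_eq_self_if_nothing_moves[OF True] by (intro exI[of _ S']) auto
  next
    case False
    then have "card (moving Opn P d) \<ge> 1"
      using Cons.prems(1) by (simp add: Suc_leI card_gt_0_iff moving_def)
    then show ?thesis using S' pot by (intro exI[of _ "d # S'"]) auto
  qed
qed

lemma finite_rect: "finite (rect l w)"
  by (rule finite_subset[of _ "{0..<int l} \<times> {0..<int w}"]) (auto simp: rect_def)

lemma potential_bounds:
  assumes "dom P \<subseteq> rect l w"
  shows "0 \<le> potential P" "potential P \<le> int (card (dom P) * (l + w))"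
proof -
  have diag: "0 \<le> fst q + snd q \<and> fst q + snd q \<le> int (l + w)" if "q \<in> dom P" for q
    using assms that by (auto simp: rect_def)
  show "0 \<le> potential P"
    unfolding potential_def by (rule sum_nonneg) (use diag in blast)
  have "potential P \<le> (\<Sum>q\<in>dom P. int (l + w))"
    unfolding potential_def by (rule sum_mono) (use diag in blast)
  then show "potential P \<le> int (card (dom P) * (l + w))" by simp
qed

theorem lemma1:
  "\<exists>c::nat. \<forall>(l::nat) (w::nat) (Opn::loc set) (P::loc \<Rightarrow> 'a option) P' (n::nat).
     Opn \<subseteq> rect l w \<longrightarrow> dom P \<subseteq> Opn \<longrightarrow> dom P' \<subseteq> Opn \<longrightarrow> card (dom P) = n \<longrightarrow>
     (\<exists>S. set S \<subseteq> {DirS, DirE} \<and> steps Opn S P = P') \<longrightarrow>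
     (\<exists>S. set S \<subseteq> {DirS, DirE} \<and> length S \<le> c * n * (l + w) \<and> steps Opn S P = P')"
proof (intro exI[of _ 1] allI impI)
  fix l w :: nat and Opn :: "loc set" and P :: "loc \<Rightarrow> 'a option" and P' n
  assume Opn: "Opn \<subseteq> rect l w" and P: "dom P \<subseteq> Opn" and P': "dom P' \<subseteq> Opn"
    and n: "card (dom P) = n" and "\<exists>S. set S \<subseteq> {DirS, DirE} \<and> steps Opn S P = P'"
  then obtain S where S: "set S \<subseteq> {DirS, DirE}" "steps Opn S P = P'" by blast
  have fin: "finite (dom P)" using finite_subset[OF subset_trans[OF P Opn] finite_rect] .
  obtain S' where S': "set S' \<subseteq> set S" "steps Opn S' P = P'"
    "int (length S') \<le> potential P' - potential P"
    using steps_shortcut[OF fin S(1), of Opn] S(2) by blast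
  have "card (dom P') = n" using card_dom_steps[OF fin] S(2) n by blast
  then have "int (length S') \<le> int (n * (l + w))"
    using S'(3) potential_bounds[of P l w] potential_bounds[of P' l w] Opn P P' by force
  then have "length S' \<le> n * (l + w)" by (simp only: of_nat_le_iff)
  then show "\<exists>S. set S \<subseteq> {DirS, DirE} \<and> length S \<le> 1 * n * (l + w) \<and> steps Opn S P = P'"
    using S S' by (intro exI[of _ S']) auto
qed

end
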